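(* Let $(M_n)_{n\in\mathbb N}$ be a submartingale with respect to a filtration $(\mathcal F_n)_{n\in\mathbb N}$, with $M_0=0$. Suppose there is $\alpha>0$ such that for every $n\in\mathbb N$, $\mathbb E[e^{\alpha\sum_{k=1}^n|\Delta_kM|}]<\infty$. Then, for every $a>0$ and every $\lambda>0$ small enough, the sequence $$\Big(\exp\big(\lambda M_n-\tfrac{\mathfrak f(\lambda a)}{a^2}G_n^a\big)\Big)_{n\in\mathbb N}$$ is a submartingale with respect to $(\mathcal F_n)$.
   Context: $\Delta_nM=M_n-M_{n-1}$; $\mathfrak f(\lambda)=e^{-\lambda}-1+\lambda$; for $a>0$, $G_n^a=\sum_{i=1}^n\mathbb E[(\Delta_iM)^2\mathbf 1_{|\Delta_iM|\le a}\mid\mathcal F_{i-1}]-a\sum_{i=1}^n|\Delta_iM|\mathbf 1_{|\Delta_iM|\ge a}$. A submartingale is an adapted integrable sequence with $\mathbb E[\Delta_nM\mid\mathcal F_{n-1}]\ge0$. *)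

theory Defs
  imports "HOL-Probability.Probability"
begin

definition filtration :: "'a measure \<Rightarrow> (nat \<Rightarrow> 'a measure) \<Rightarrow> bool" where
  "filtration M F \<longleftrightarrow> (\<forall>n. subalgebra M (F n)) \<and> (\<forall>n. sets (F n) \<subseteq> sets (F (Suc n)))"

definition incr :: "(nat \<Rightarrow> 'a \<Rightarrow> real) \<Rightarrow> nat \<Rightarrow> 'a \<Rightarrow> real" where
  "incr X n x = X n x - X (n - 1) x"

definition submartingale :: "'a measure \<Rightarrow> (nat \<Rightarrow> 'a measure) \<Rightarrow> (nat \<Rightarrow> 'a \<Rightarrow> real) \<Rightarrow> bool" where
  "submartingale M F X \<longleftrightarrow>
     (\<forall>n. X n \<in> borel_measurable (F n)) \<and> (\<forall>n. integrable M (X n)) \<and>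
     (\<forall>n\<ge>1. AE x in M. real_cond_exp M (F (n - 1)) (incr X n) x \<ge> 0)"

definition frak_f :: "real \<Rightarrow> real" where
  "frak_f t = exp (- t) - 1 + t"

definition G :: "'a measure \<Rightarrow> (nat \<Rightarrow> 'a measure) \<Rightarrow> (nat \<Rightarrow> 'a \<Rightarrow> real) \<Rightarrow> real \<Rightarrow> nat \<Rightarrow> 'a \<Rightarrow> real" where
  "G M F X a n x =
     (\<Sum>i\<in>{1..n}. real_cond_exp M (F (i - 1))
         (\<lambda>y. (incr X i y)\<^sup>2 * indicator {y. \<bar>incr X i y\<bar> \<le> a} y) x)
     - a * (\<Sum>i\<in>{1..n}. \<bar>incr X i x\<bar> * indicator {y. \<bar>incr X i y\<bar> \<ge> a} x)"

end

theory Submission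
  imports Defs
begin

(* Write c = f(l a) / a^2 and D = Delta_(n+1) X.  The process Y_n = exp (l X_n - c G_n) satisfies
   Y_(n+1) = Y_n exp (- c V) Z with V = E[D^2 1{|D| <= a} | F_n] and Z = exp (l D + c a |D| 1{|D| >= a}),
   so it is a submartingale as soon as E[Z | F_n] >= exp (c V).
   Pointwise, Z dominates 1 + l D + c D^2 1{|D| <= a} plus the margin (l^2/2 - c) D^2 1{0 <= D <= a}
   + c a D 1{D > a}; on {-a <= D < 0} this is the monotonicity of f(y)/y^2.  After conditioning,
   E[D | F_n] >= 0 bounds the conditional mass of the small negative increments by that of the
   positive ones, and for l a <= 1/20 the margin then absorbs the quadratic error in
   exp (c V) <= 1 + c V + (c V)^2.  Integrability of everything follows from l + c a <= alpha. *)

section \<open>Elementary inequalities for exp (-t) - 1 + t\<close>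

lemma exp_minus_le_Maclaurin:
  fixes t :: real
  assumes "0 \<le> t" "odd n"
  shows "exp (- t) \<le> (\<Sum>m<n. (- t) ^ m / fact m)"
proof -
  obtain s where "exp (- t) = (\<Sum>m<n. (- t) ^ m / fact m) + exp s / fact n * (- t) ^ n"
    using Maclaurin_exp_le[of "- t" n] by blast
  moreover have "(- t) ^ n \<le> 0"
    using assms by (simp add: power_minus_odd)
  ultimately show ?thesis
    by (simp add: divide_nonpos_pos mult_nonneg_nonpos)
qed

lemma frak_f_nonneg: "0 \<le> frak_f t"
  using exp_ge_add_one_self[of "- t"] by (simp add: frak_f_def)

lemma frak_f_le_half_square:
  assumes "0 \<le> t"
  shows "frak_f t \<le> t\<^sup>2 / 2"
proof -
  have "exp (- t) \<le> (\<Sum>m<3. (- t) ^ m / fact m)"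
    by (rule exp_minus_le_Maclaurin) (use assms in auto)
  then show ?thesis
    by (simp add: frak_f_def eval_nat_numeral power2_eq_square)
qed

lemma frak_f_le_Maclaurin_4:
  assumes "0 \<le> t"
  shows "frak_f t \<le> t\<^sup>2 / 2 - t ^ 3 / 6 + t ^ 4 / 24"
proof -
  have "exp (- t) \<le> (\<Sum>m<5. (- t) ^ m / fact m)"
    by (rule exp_minus_le_Maclaurin) (use assms in auto)
  then show ?thesis
    by (simp add: frak_f_def eval_nat_numeral)
qed

lemma frak_f_square_le:
  assumes "0 \<le> t" "t \<le> 1 / 20"
  shows "10 * (frak_f t)\<^sup>2 \<le> t\<^sup>2 / 2 - frak_f t"
proof -
  have "10 * (frak_f t)\<^sup>2 \<le> 10 * (t\<^sup>2 / 2)\<^sup>2"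
    using frak_f_nonneg frak_f_le_half_square[OF assms(1)] by (simp add: power_mono)
  also have "\<dots> \<le> t ^ 3 / 6 - t ^ 4 / 24"
  proof -
    have "t ^ 3 * (t * (5 / 2 + 1 / 24)) \<le> t ^ 3 * (1 / 6)"
      using assms by (intro mult_left_mono) auto
    then show ?thesis
      by (simp add: power2_eq_square power3_eq_cube power4_eq_xxxx algebra_simps)
  qed
  also have "\<dots> \<le> t\<^sup>2 / 2 - frak_f t"
    using frak_f_le_Maclaurin_4[OF assms(1)] by simp
  finally show ?thesis .
qed

lemma frak_f_coefficient_bounds:
  fixes a l :: real
  defines "c \<equiv> frak_f (l * a) / a\<^sup>2"
  assumes "0 < a" "0 < l" "l * a \<le> 1 / 20"
  shows "0 \<le> c" "c * a \<le> l" "4 * c * a\<^sup>2 \<le> 1" "10 * c\<^sup>2 * a\<^sup>2 \<le> l\<^sup>2 / 2 - c"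
proof -
  have "0 \<le> l * a"
    using assms by simp
  then have half: "frak_f (l * a) \<le> (l * a)\<^sup>2 / 2"
    and square: "10 * (frak_f (l * a))\<^sup>2 \<le> (l * a)\<^sup>2 / 2 - frak_f (l * a)"
    using frak_f_le_half_square frak_f_square_le assms(4) by auto
  have "(l * a)\<^sup>2 \<le> (1 / 20)\<^sup>2"
    using \<open>0 \<le> l * a\<close> assms(4) by (intro power_mono) auto
  with half square assms(2) frak_f_nonneg[of "l * a"]
  show "0 \<le> c" "4 * c * a\<^sup>2 \<le> 1" "10 * c\<^sup>2 * a\<^sup>2 \<le> l\<^sup>2 / 2 - c"
    by (auto simp: c_def field_simps power_mult_distrib)
  have "c * a = frak_f (l * a) / a"
    by (simp add: c_def power2_eq_square)
  also have "\<dots> \<le> (l * a)\<^sup>2 / 2 / a"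
    using half assms(2) by (intro divide_right_mono) auto
  also have "\<dots> = l * (l * a / 2)"
    using assms(2) by (simp add: power2_eq_square)
  also have "\<dots> \<le> l"
    using assms(3,4) by (intro mult_left_le) auto
  finally show "c * a \<le> l" .
qed

lemma two_minus_mult_exp_le:
  fixes y :: real
  assumes "0 \<le> y"
  shows "(2 - y) * exp y \<le> 2 + y"
proof -
  have "(2 - y) * exp y - (2 + y) \<le> (2 - 0) * exp 0 - (2 + 0)"
  proof (rule DERIV_nonpos_imp_nonincreasing[OF assms])
    fix x :: real
    assume "0 \<le> x"
    have "(1 - x) * exp x \<le> exp (- x) * exp x"
      using exp_ge_add_one_self[of "- x"] by (intro mult_right_mono) auto
    then have "(1 - x) * exp x - 1 \<le> 0"
      by (simp add: exp_minus)
    moreover have "((\<lambda>x. (2 - x) * exp x - (2 + x)) has_real_derivative (1 - x) * exp x - 1) (at x)"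
      by (auto intro!: derivative_eq_intros simp: algebra_simps)
    ultimately show "\<exists>d. ((\<lambda>x. (2 - x) * exp x - (2 + x)) has_real_derivative d) (at x) \<and> d \<le> 0"
      by blast
  qed
  then show ?thesis
    by simp
qed

lemma frak_f_div_square_antimono:
  assumes "0 < y" "y \<le> t"
  shows "frak_f t / t\<^sup>2 \<le> frak_f y / y\<^sup>2"
proof (rule DERIV_nonpos_imp_nonincreasing[OF assms(2)])
  fix x :: real
  assume "y \<le> x"
  with assms have "0 < x"
    by simp
  have "(2 - x) * exp x * exp (- x) \<le> (2 + x) * exp (- x)"
    using two_minus_mult_exp_le \<open>0 < x\<close> by (intro mult_right_mono) auto
  then have "2 - x \<le> (2 + x) * exp (- x)"
    by (simp add: mult.assoc flip: exp_add)
  then have "(2 - x - (2 + x) * exp (- x)) / x ^ 3 \<le> 0"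
    using \<open>0 < x\<close> by (intro divide_nonpos_pos) auto
  moreover have "((\<lambda>x. frak_f x / x\<^sup>2) has_real_derivative (2 - x - (2 + x) * exp (- x)) / x ^ 3) (at x)"
    unfolding frak_f_def using \<open>0 < x\<close>
    by (auto intro!: derivative_eq_intros simp: field_simps power2_eq_square power3_eq_cube)
  ultimately show "\<exists>d. ((\<lambda>x. frak_f x / x\<^sup>2) has_real_derivative d) (at x) \<and> d \<le> 0"
    by blast
qed

section \<open>Truncations of an increment\<close>

definition square_below :: "real \<Rightarrow> real \<Rightarrow> real" where
  "square_below a d = (if \<bar>d\<bar> \<le> a then d\<^sup>2 else 0)"

definition abs_above :: "real \<Rightarrow> real \<Rightarrow> real" where
  "abs_above a d = (if a \<le> \<bar>d\<bar> then \<bar>d\<bar> else 0)"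

definition pos_below :: "real \<Rightarrow> real \<Rightarrow> real" where
  "pos_below a d = (if 0 \<le> d \<and> d \<le> a then d else 0)"

definition pos_above :: "real \<Rightarrow> real \<Rightarrow> real" where
  "pos_above a d = (if a < d then d else 0)"

definition neg_square_below :: "real \<Rightarrow> real \<Rightarrow> real" where
  "neg_square_below a d = (if - a \<le> d \<and> d < 0 then d\<^sup>2 else 0)"

lemma square_below_eq: "square_below a d = (pos_below a d)\<^sup>2 + neg_square_below a d"
  by (auto simp: square_below_def pos_below_def neg_square_below_def)

lemma abs_pos_below_le: "0 < a \<Longrightarrow> \<bar>pos_below a d\<bar> \<le> a"
  by (simp add: pos_below_def)

lemma neg_square_below_bounds: "0 \<le> neg_square_below a d" "0 < a \<Longrightarrow> neg_square_below a d \<le> a\<^sup>2"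
  by (auto simp: neg_square_below_def abs_le_square_iff[symmetric])

lemma abs_pos_above_le: "\<bar>pos_above a d\<bar> \<le> \<bar>d\<bar>"
  by (simp add: pos_above_def)

lemma neg_square_below_le: "0 < a \<Longrightarrow> neg_square_below a d \<le> a * (pos_below a d + pos_above a d - d)"
proof (cases "- a \<le> d \<and> d < 0")
  case True
  then have "(- d) * (- d) \<le> a * (- d)"
    by (intro mult_right_mono) auto
  with True show ?thesis
    by (simp add: neg_square_below_def pos_below_def pos_above_def power2_eq_square)
qed (auto simp: neg_square_below_def pos_below_def pos_above_def)

lemma exp_lower_frak_f_quadratic:
  fixes a l d :: real
  assumes "0 < l" "- a \<le> d" "d < 0"
  shows "1 + l * d + frak_f (l * a) / a\<^sup>2 * d\<^sup>2 \<le> exp (l * d)"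
proof -
  have "frak_f (l * a) / (l * a)\<^sup>2 \<le> frak_f (- (l * d)) / (- (l * d))\<^sup>2"
    using assms mult_left_mono[of "- d" a l] by (intro frak_f_div_square_antimono) (auto simp: mult_pos_neg)
  then have "frak_f (l * a) / a\<^sup>2 * d\<^sup>2 \<le> frak_f (- (l * d))"
    using assms by (simp add: field_simps power_mult_distrib)
  then show ?thesis
    by (simp add: frak_f_def)
qed

lemma exp_ge_increment_bound:
  fixes a l d :: real
  defines "c \<equiv> frak_f (l * a) / a\<^sup>2"
  assumes "0 < a" "0 < l"
  shows "1 + l * d + c * square_below a d + (l\<^sup>2 / 2 - c) * (pos_below a d)\<^sup>2 + c * a * pos_above a d
         \<le> exp (l * d + c * a * abs_above a d)" (is "?lhs \<le> _")
proof -
  have "0 \<le> c"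
    unfolding c_def by (simp add: frak_f_nonneg)
  then have exp_le: "exp (l * d) \<le> exp (l * d + c * a * abs_above a d)"
    using \<open>0 < a\<close> by (simp add: abs_above_def)
  consider "a < d" | "0 \<le> d" "d \<le> a" | "- a \<le> d" "d < 0" | "d < - a"
    by linarith
  then show ?thesis
  proof cases
    case 1
    then show ?thesis
      using exp_ge_add_one_self[of "l * d + c * a * d"] \<open>0 < a\<close>
      by (simp add: square_below_def abs_above_def pos_below_def pos_above_def algebra_simps)
  next
    case 2
    have "1 + l * d + (l * d)\<^sup>2 / 2 \<le> exp (l * d)"
      using 2 \<open>0 < l\<close> by (intro exp_lower_Taylor_quadratic) simp
    with 2 have "?lhs \<le> exp (l * d)"
      by (simp add: square_below_def pos_below_def pos_above_def power_mult_distrib algebra_simps)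
    with exp_le show ?thesis
      by linarith
  next
    case 3
    have "1 + l * d + c * d\<^sup>2 \<le> exp (l * d)"
      unfolding c_def using \<open>0 < l\<close> 3 by (rule exp_lower_frak_f_quadratic)
    with 3 have "?lhs \<le> exp (l * d)"
      by (simp add: square_below_def pos_below_def pos_above_def)
    with exp_le show ?thesis
      by linarith
  next
    case 4
    then have "?lhs \<le> exp (l * d)"
      using exp_ge_add_one_self[of "l * d"] \<open>0 < a\<close>
      by (simp add: square_below_def pos_below_def pos_above_def)
    with exp_le show ?thesis
      by linarith
  qed
qed

lemma square_le_of_le_mult_sum:
  fixes a P N R s :: real
  assumes "0 < a" "0 \<le> P" "0 \<le> N" "N \<le> a\<^sup>2" "0 \<le> R" "s\<^sup>2 \<le> P" "N \<le> a * (s + R)"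
  shows "N\<^sup>2 \<le> 4 * a\<^sup>2 * P + 2 * a ^ 3 * R"
proof (cases "s \<le> R")
  case True
  then have "a * (s + R) \<le> a * (2 * R)"
    using assms(1) by (intro mult_left_mono) auto
  then have "N \<le> 2 * a * R"
    using assms(7) by simp
  have "N\<^sup>2 \<le> a\<^sup>2 * N"
    using mult_right_mono[OF assms(4,3)] by (simp add: power2_eq_square)
  also have "\<dots> \<le> a\<^sup>2 * (2 * a * R)"
    using \<open>N \<le> 2 * a * R\<close> by (simp add: mult_left_mono)
  also have "\<dots> = 2 * a ^ 3 * R"
    by (simp add: power2_eq_square power3_eq_cube)
  finally have "N\<^sup>2 \<le> 2 * a ^ 3 * R" .
  moreover have "0 \<le> 4 * a\<^sup>2 * P"
    using assms(2) by simp
  ultimately show ?thesis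
    by linarith
next
  case False
  then have "a * (s + R) \<le> a * (2 * s)"
    using assms(1) by (intro mult_left_mono) auto
  then have "N \<le> 2 * a * s"
    using assms(7) by simp
  then have "N\<^sup>2 \<le> (2 * a * s)\<^sup>2"
    using assms(3) by (simp add: power_mono)
  also have "\<dots> = 4 * a\<^sup>2 * s\<^sup>2"
    by (simp add: power_mult_distrib)
  also have "\<dots> \<le> 4 * a\<^sup>2 * P"
    using assms(6) by (simp add: mult_left_mono)
  finally have "N\<^sup>2 \<le> 4 * a\<^sup>2 * P" .
  moreover have "0 \<le> 2 * a ^ 3 * R"
    using assms(1,5) by simp
  ultimately show ?thesis
    by linarith
qed

lemma exp_bound_by_truncated_moments:
  fixes a c \<kappa> P N R s :: real
  assumes "0 < a" "0 \<le> c" "4 * c * a\<^sup>2 \<le> 1" "10 * c\<^sup>2 * a\<^sup>2 \<le> \<kappa>"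
    and "0 \<le> P" "P \<le> a\<^sup>2" "0 \<le> N" "N \<le> a\<^sup>2" "0 \<le> R"
    and "s\<^sup>2 \<le> P" "N \<le> a * (s + R)"
  shows "exp (c * (P + N)) \<le> 1 + c * (P + N) + \<kappa> * P + c * a * R"
proof -
  have N_square: "N\<^sup>2 \<le> 4 * a\<^sup>2 * P + 2 * a ^ 3 * R"
    using assms(1,5,7-11) by (rule square_le_of_le_mult_sum)
  have "P\<^sup>2 \<le> a\<^sup>2 * P"
    using mult_right_mono[OF assms(6,5)] by (simp add: power2_eq_square)
  moreover have "(P + N)\<^sup>2 \<le> 2 * P\<^sup>2 + 2 * N\<^sup>2"
    using zero_le_power2[of "P - N"] by (simp add: power2_eq_square algebra_simps)
  ultimately have PN_square: "(P + N)\<^sup>2 \<le> 10 * a\<^sup>2 * P + 4 * a ^ 3 * R"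
    using N_square by linarith
  define x where "x = c * (P + N)"
  have "c * (P + N) \<le> c * (2 * a\<^sup>2)"
    using assms(2,6,8) by (intro mult_left_mono) auto
  then have "0 \<le> x" "x \<le> 1"
    using assms(2,3,5,7) unfolding x_def by auto
  then have "exp x \<le> 1 + x + x\<^sup>2"
    by (rule exp_bound)
  also have "x\<^sup>2 \<le> c\<^sup>2 * (10 * a\<^sup>2 * P + 4 * a ^ 3 * R)"
    unfolding x_def power_mult_distrib using PN_square by (intro mult_left_mono) auto
  also have "\<dots> = (10 * c\<^sup>2 * a\<^sup>2) * P + (4 * c * a\<^sup>2) * (c * a * R)"
    by (simp add: power2_eq_square power3_eq_cube algebra_simps)
  also have "\<dots> \<le> \<kappa> * P + 1 * (c * a * R)"
    using assms by (intro add_mono mult_right_mono) auto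
  finally show ?thesis
    unfolding x_def by simp
qed

section \<open>Conditional expectations of truncated increments\<close>

lemma borel_measurable_truncations [measurable]:
  "square_below a \<in> borel_measurable borel" "abs_above a \<in> borel_measurable borel"
  "pos_below a \<in> borel_measurable borel" "pos_above a \<in> borel_measurable borel"
  "neg_square_below a \<in> borel_measurable borel"
  unfolding square_below_def[abs_def] abs_above_def[abs_def] pos_below_def[abs_def]
    pos_above_def[abs_def] neg_square_below_def[abs_def]
  by measurable

context finite_measure_subalgebra
begin

lemma integrable_truncations:
  fixes D :: "'a \<Rightarrow> real"
  assumes "integrable M D" "0 < a"
  shows "integrable M (\<lambda>x. square_below a (D x))" "integrable M (\<lambda>x. (pos_below a (D x))\<^sup>2)"
    "integrable M (\<lambda>x. pos_below a (D x))" "integrable M (\<lambda>x. neg_square_below a (D x))"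
    "integrable M (\<lambda>x. pos_above a (D x))"
proof -
  have [measurable]: "D \<in> borel_measurable M"
    using assms(1) by (rule borel_measurable_integrable)
  show "integrable M (\<lambda>x. pos_below a (D x))"
    using abs_pos_below_le[OF assms(2)] by (intro integrable_const_bound[where B = a]) auto
  have "(pos_below a d)\<^sup>2 \<le> a\<^sup>2" for d
    using abs_pos_below_le[OF assms(2)] assms(2) by (auto simp: abs_le_square_iff[symmetric])
  then show int_square: "integrable M (\<lambda>x. (pos_below a (D x))\<^sup>2)"
    by (intro integrable_const_bound[where B = "a\<^sup>2"]) auto
  show int_neg: "integrable M (\<lambda>x. neg_square_below a (D x))"
    using neg_square_below_bounds[of a] assms(2)
    by (intro integrable_const_bound[where B = "a\<^sup>2"]) auto
  show "integrable M (\<lambda>x. square_below a (D x))"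
    unfolding square_below_eq using int_square int_neg by auto
  show "integrable M (\<lambda>x. pos_above a (D x))"
    using abs_pos_above_le by (intro Bochner_Integration.integrable_bound[OF assms(1)]) auto
qed

lemma real_cond_exp_affine_combination:
  fixes f1 f2 f3 f4 :: "'a \<Rightarrow> real"
  assumes "integrable M f1" "integrable M f2" "integrable M f3" "integrable M f4"
  shows "AE x in M. real_cond_exp M F (\<lambda>x. b0 + b1 * f1 x + b2 * f2 x + b3 * f3 x + b4 * f4 x) x
           = b0 + b1 * real_cond_exp M F f1 x + b2 * real_cond_exp M F f2 x
               + b3 * real_cond_exp M F f3 x + b4 * real_cond_exp M F f4 x"
proof -
  let ?CE = "real_cond_exp M F"
  have "AE x in M. ?CE (\<lambda>x. b0 + b1 * f1 x + b2 * f2 x + b3 * f3 x + b4 * f4 x) x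
      = ?CE (\<lambda>x. b0 + b1 * f1 x + b2 * f2 x + b3 * f3 x) x + ?CE (\<lambda>x. b4 * f4 x) x"
    using assms by (intro real_cond_exp_add) auto
  moreover have "AE x in M. ?CE (\<lambda>x. b0 + b1 * f1 x + b2 * f2 x + b3 * f3 x) x
      = ?CE (\<lambda>x. b0 + b1 * f1 x + b2 * f2 x) x + ?CE (\<lambda>x. b3 * f3 x) x"
    using assms by (intro real_cond_exp_add) auto
  moreover have "AE x in M. ?CE (\<lambda>x. b0 + b1 * f1 x + b2 * f2 x) x
      = ?CE (\<lambda>x. b0 + b1 * f1 x) x + ?CE (\<lambda>x. b2 * f2 x) x"
    using assms by (intro real_cond_exp_add) auto
  moreover have "AE x in M. ?CE (\<lambda>x. b0 + b1 * f1 x) x = ?CE (\<lambda>x. b0) x + ?CE (\<lambda>x. b1 * f1 x) x"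
    using assms by (intro real_cond_exp_add) auto
  moreover have "AE x in M. ?CE (\<lambda>x. b0) x = b0"
    by (rule real_cond_exp_F_meas) auto
  ultimately show ?thesis
    using real_cond_exp_cmult[OF assms(1), of b1] real_cond_exp_cmult[OF assms(2), of b2]
      real_cond_exp_cmult[OF assms(3), of b3] real_cond_exp_cmult[OF assms(4), of b4]
    by eventually_elim simp
qed

lemma real_cond_exp_neg_square_below_le:
  fixes D :: "'a \<Rightarrow> real"
  assumes D: "integrable M D" and drift: "AE x in M. 0 \<le> real_cond_exp M F D x" and "0 < a"
  shows "AE x in M. real_cond_exp M F (\<lambda>x. neg_square_below a (D x)) x
           \<le> a * (real_cond_exp M F (\<lambda>x. pos_below a (D x)) x + real_cond_exp M F (\<lambda>x. pos_above a (D x)) x)"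
proof -
  let ?CE = "real_cond_exp M F"
  note int = integrable_truncations[OF D \<open>0 < a\<close>]
  \<comment> \<open>zero coefficients pad the bound to the shape of \<open>real_cond_exp_affine_combination\<close>\<close>
  have "neg_square_below a (D x) \<le> 0 + a * pos_below a (D x) + a * pos_above a (D x) + (- a) * D x + 0 * D x"
    for x
    using neg_square_below_le[OF \<open>0 < a\<close>, of "D x"] by (simp add: algebra_simps)
  then have "AE x in M. ?CE (\<lambda>x. neg_square_below a (D x)) x
      \<le> ?CE (\<lambda>x. 0 + a * pos_below a (D x) + a * pos_above a (D x) + (- a) * D x + 0 * D x) x"
    using int D by (intro real_cond_exp_mono AE_I2) auto
  moreover have "AE x in M. ?CE (\<lambda>x. 0 + a * pos_below a (D x) + a * pos_above a (D x) + (- a) * D x + 0 * D x) x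
      = a * ?CE (\<lambda>x. pos_below a (D x)) x + a * ?CE (\<lambda>x. pos_above a (D x)) x - a * ?CE D x"
    using real_cond_exp_affine_combination[OF int(3,5) D D, of 0 a a "- a" 0] by eventually_elim simp
  ultimately show ?thesis
    using drift
  proof eventually_elim
    case (elim x)
    moreover have "0 \<le> a * ?CE D x"
      using elim(3) \<open>0 < a\<close> by simp
    ultimately show ?case
      by (simp add: distrib_left)
  qed
qed

lemma real_cond_exp_exp_increment_ge:
  fixes D :: "'a \<Rightarrow> real" and a l :: real
  defines "c \<equiv> frak_f (l * a) / a\<^sup>2"
  assumes D: "integrable M D" and "0 < a" "0 < l"
    and int_Z: "integrable M (\<lambda>x. exp (l * D x + c * a * abs_above a (D x)))"
  shows "AE x in M. 1 + l * real_cond_exp M F D x + c * real_cond_exp M F (\<lambda>x. square_below a (D x)) x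
           + (l\<^sup>2 / 2 - c) * real_cond_exp M F (\<lambda>x. (pos_below a (D x))\<^sup>2) x
           + c * a * real_cond_exp M F (\<lambda>x. pos_above a (D x)) x
         \<le> real_cond_exp M F (\<lambda>x. exp (l * D x + c * a * abs_above a (D x))) x"
proof -
  let ?L = "\<lambda>x. 1 + l * D x + c * square_below a (D x) + (l\<^sup>2 / 2 - c) * (pos_below a (D x))\<^sup>2
                 + c * a * pos_above a (D x)"
  note int = integrable_truncations[OF D \<open>0 < a\<close>]
  have "AE x in M. real_cond_exp M F ?L x
      \<le> real_cond_exp M F (\<lambda>x. exp (l * D x + c * a * abs_above a (D x))) x"
    using exp_ge_increment_bound[OF \<open>0 < a\<close> \<open>0 < l\<close>] D int int_Z
    by (intro real_cond_exp_mono AE_I2) (auto simp: c_def)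
  with real_cond_exp_affine_combination[OF D int(1,2,5), of 1 l c "l\<^sup>2 / 2 - c" "c * a"] show ?thesis
    by eventually_elim simp
qed

lemma exp_real_cond_exp_square_below_le:
  fixes D :: "'a \<Rightarrow> real" and a l :: real
  defines "c \<equiv> frak_f (l * a) / a\<^sup>2"
  assumes D: "integrable M D" and drift: "AE x in M. 0 \<le> real_cond_exp M F D x"
    and "0 < a" "0 < l" "l * a \<le> 1 / 20"
    and int_Z: "integrable M (\<lambda>x. exp (l * D x + c * a * abs_above a (D x)))"
  shows "AE x in M. exp (c * real_cond_exp M F (\<lambda>x. square_below a (D x)) x)
           \<le> real_cond_exp M F (\<lambda>x. exp (l * D x + c * a * abs_above a (D x))) x"
proof -
  let ?CE = "real_cond_exp M F"
  let ?S = "\<lambda>x. pos_below a (D x)" and ?P = "\<lambda>x. (pos_below a (D x))\<^sup>2"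
    and ?N = "\<lambda>x. neg_square_below a (D x)" and ?R = "\<lambda>x. pos_above a (D x)"
  have [measurable]: "D \<in> borel_measurable M"
    using D by (rule borel_measurable_integrable)
  note int = integrable_truncations[OF D \<open>0 < a\<close>]
  have split: "AE x in M. ?CE (\<lambda>x. square_below a (D x)) x = ?CE ?P x + ?CE ?N x"
    unfolding square_below_eq using int(2,4) by (rule real_cond_exp_add)
  have "(pos_below a d)\<^sup>2 \<le> a\<^sup>2" for d
    using abs_pos_below_le[OF \<open>0 < a\<close>] \<open>0 < a\<close> by (auto simp: abs_le_square_iff[symmetric])
  then have P_bounds: "AE x in M. 0 \<le> ?CE ?P x \<and> ?CE ?P x \<le> a\<^sup>2"
    using real_cond_exp_pos[of ?P] real_cond_exp_le_c[OF int(2), of "a\<^sup>2"] by auto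
  have N_bounds: "AE x in M. 0 \<le> ?CE ?N x \<and> ?CE ?N x \<le> a\<^sup>2"
    using real_cond_exp_pos[of ?N] real_cond_exp_le_c[OF int(4), of "a\<^sup>2"]
      neg_square_below_bounds[of a] \<open>0 < a\<close> by auto
  have R_nonneg: "AE x in M. 0 \<le> ?CE ?R x"
    using \<open>0 < a\<close> by (intro real_cond_exp_pos AE_I2) (auto simp: pos_above_def)
  have Jensen: "AE x in M. (?CE ?S x)\<^sup>2 \<le> ?CE ?P x"
    using int(2) by (intro real_cond_exp_jensens_inequality(2)[OF int(3), of UNIV]) (auto intro: convex_power2)
  note c_bounds = frak_f_coefficient_bounds[OF \<open>0 < a\<close> \<open>0 < l\<close> \<open>l * a \<le> 1 / 20\<close>, folded c_def]
  show ?thesis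
    using real_cond_exp_exp_increment_ge[OF D \<open>0 < a\<close> \<open>0 < l\<close> int_Z[unfolded c_def], folded c_def]
      real_cond_exp_neg_square_below_le[OF D drift \<open>0 < a\<close>]
      drift split P_bounds N_bounds R_nonneg Jensen
  proof eventually_elim
    case (elim x)
    have "exp (c * (?CE ?P x + ?CE ?N x))
        \<le> 1 + c * (?CE ?P x + ?CE ?N x) + (l\<^sup>2 / 2 - c) * ?CE ?P x + c * a * ?CE ?R x"
      using elim by (intro exp_bound_by_truncated_moments[OF \<open>0 < a\<close> c_bounds(1,3,4)]) auto
    also have "\<dots> \<le> 1 + l * ?CE D x + c * (?CE ?P x + ?CE ?N x) + (l\<^sup>2 / 2 - c) * ?CE ?P x + c * a * ?CE ?R x"
      using elim(3) \<open>0 < l\<close> by simp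
    finally show ?case
      using elim(1,4) by simp
  qed
qed

lemma real_cond_exp_compensated_exp_ge_one:
  fixes D :: "'a \<Rightarrow> real" and a l :: real
  defines "c \<equiv> frak_f (l * a) / a\<^sup>2"
  assumes D: "integrable M D" and drift: "AE x in M. 0 \<le> real_cond_exp M F D x"
    and "0 < a" "0 < l" "l * a \<le> 1 / 20"
    and int_Z: "integrable M (\<lambda>x. exp (l * D x + c * a * abs_above a (D x)))"
  shows "integrable M (\<lambda>x. exp (- c * real_cond_exp M F (\<lambda>x. square_below a (D x)) x)
                             * exp (l * D x + c * a * abs_above a (D x)))" (is "integrable M ?W")
    and "AE x in M. 1 \<le> real_cond_exp M F (\<lambda>x. exp (- c * real_cond_exp M F (\<lambda>x. square_below a (D x)) x)
                                            * exp (l * D x + c * a * abs_above a (D x))) x"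
proof -
  let ?V = "real_cond_exp M F (\<lambda>x. square_below a (D x))"
  let ?Z = "\<lambda>x. exp (l * D x + c * a * abs_above a (D x))"
  have [measurable]: "D \<in> borel_measurable M"
    using D by (rule borel_measurable_integrable)
  have "0 \<le> c"
    by (simp add: c_def frak_f_nonneg)
  have V_nonneg: "AE x in M. 0 \<le> ?V x"
    by (intro real_cond_exp_pos AE_I2) (auto simp: square_below_def)
  show int_W: "integrable M ?W"
  proof (rule Bochner_Integration.integrable_bound[OF int_Z])
    show "?W \<in> borel_measurable M"
      by measurable
    show "AE x in M. norm (?W x) \<le> norm (?Z x)"
      using V_nonneg by eventually_elim (use \<open>0 \<le> c\<close> in \<open>simp add: mult_nonneg_nonneg\<close>)
  qed
  have "AE x in M. real_cond_exp M F ?W x = exp (- c * ?V x) * real_cond_exp M F ?Z x"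
    using int_W by (intro real_cond_exp_mult) auto
  moreover have "AE x in M. exp (c * ?V x) \<le> real_cond_exp M F ?Z x"
    using exp_real_cond_exp_square_below_le[OF D drift \<open>0 < a\<close> \<open>0 < l\<close> \<open>l * a \<le> 1 / 20\<close>] int_Z
    by (simp add: c_def)
  ultimately show "AE x in M. 1 \<le> real_cond_exp M F ?W x"
  proof eventually_elim
    case (elim x)
    then have "exp (c * ?V x) * 1 \<le> exp (c * ?V x) * real_cond_exp M F ?W x"
      by (simp add: exp_minus field_simps)
    then show ?case
      by (simp only: mult_le_cancel_left_pos[OF exp_gt_zero])
  qed
qed

end

section \<open>Multiplicative submartingales\<close>

lemma filtration_subalgebra_mono:
  assumes "filtration M F" "i \<le> j"
  shows "subalgebra (F j) (F i)"
proof -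
  have "sets (F i) \<subseteq> sets (F j)"
    using lift_Suc_mono_le[of "\<lambda>n. sets (F n)", OF _ assms(2)] assms(1)
    unfolding filtration_def by auto
  moreover have "space (F i) = space (F j)"
    using assms(1) unfolding filtration_def subalgebra_def by auto
  ultimately show ?thesis
    unfolding subalgebra_def by simp
qed

lemma measurable_filtration_mono:
  assumes "filtration M F" "i \<le> j" "f \<in> measurable (F i) N"
  shows "f \<in> measurable (F j) N"
  using measurable_from_subalg[OF filtration_subalgebra_mono[OF assms(1,2)] assms(3)] .

lemma measurable_filtration_imp_measurable:
  assumes "filtration M F" "f \<in> measurable (F n) N"
  shows "f \<in> measurable M N"
  using assms measurable_from_subalg unfolding filtration_def by blast

lemma filtration_finite_measure_subalgebra:
  assumes "finite_measure M" "filtration M F"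
  shows "finite_measure_subalgebra M (F n)"
  using assms unfolding filtration_def finite_measure_subalgebra_def finite_measure_subalgebra_axioms_def
  by auto

lemma submartingaleI_multiplicative:
  fixes Y W :: "nat \<Rightarrow> 'a \<Rightarrow> real"
  assumes "finite_measure M" "filtration M F"
    and adapted: "\<And>n. Y n \<in> borel_measurable (F n)" and int_Y: "\<And>n. integrable M (Y n)"
    and Y_Suc: "\<And>n x. Y (Suc n) x = Y n x * W n x" and "\<And>n x. 0 \<le> Y n x"
    and int_W: "\<And>n. integrable M (W n)"
    and W_ge: "\<And>n. AE x in M. 1 \<le> real_cond_exp M (F n) (W n) x"
  shows "submartingale M F Y"
  unfolding submartingale_def
proof (intro conjI allI impI adapted int_Y)
  fix n :: nat
  assume "1 \<le> n"
  then obtain m where n: "n = Suc m"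
    using Suc_le_D by auto
  interpret finite_measure_subalgebra M "F m"
    using filtration_finite_measure_subalgebra assms(1,2) .
  have incr_Y: "incr Y n = (\<lambda>x. Y m x * (W m x - 1))"
    by (simp add: fun_eq_iff incr_def n Y_Suc algebra_simps)
  have "integrable M (\<lambda>x. Y (Suc m) x - Y m x)"
    using int_Y by auto
  then have "integrable M (\<lambda>x. Y m x * (W m x - 1))"
    by (simp add: Y_Suc algebra_simps)
  moreover have "W m \<in> borel_measurable M"
    using int_W by auto
  ultimately have "AE x in M. real_cond_exp M (F m) (\<lambda>x. Y m x * (W m x - 1)) x
      = Y m x * real_cond_exp M (F m) (\<lambda>x. W m x - 1) x"
    using adapted by (intro real_cond_exp_mult) auto
  moreover have "AE x in M. real_cond_exp M (F m) (\<lambda>x. W m x - 1) x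
      = real_cond_exp M (F m) (W m) x - real_cond_exp M (F m) (\<lambda>x. 1) x"
    using int_W by (intro real_cond_exp_diff) auto
  moreover have "AE x in M. real_cond_exp M (F m) (\<lambda>x. 1) x = 1"
    by (rule real_cond_exp_F_meas) auto
  ultimately show "AE x in M. 0 \<le> real_cond_exp M (F (n - 1)) (incr Y n) x"
    using W_ge[of m] unfolding incr_Y
    by eventually_elim (simp add: n assms(6))
qed

section \<open>The exponential process\<close>

lemma G_eq:
  "G M F X a n x = (\<Sum>i\<in>{1..n}. real_cond_exp M (F (i - 1)) (\<lambda>y. square_below a (incr X i y)) x)
                   - a * (\<Sum>i\<in>{1..n}. abs_above a (incr X i x))"
proof -
  have "(\<lambda>y. (incr X i y)\<^sup>2 * indicator {y. \<bar>incr X i y\<bar> \<le> a} y) = (\<lambda>y. square_below a (incr X i y))"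
    "\<bar>incr X i x\<bar> * indicator {y. a \<le> \<bar>incr X i y\<bar>} x = abs_above a (incr X i x)" for i
    by (auto simp: square_below_def abs_above_def split: split_indicator)
  then show ?thesis
    by (simp add: G_def)
qed

lemma G_Suc:
  "G M F X a (Suc n) x = G M F X a n x
     + real_cond_exp M (F n) (\<lambda>y. square_below a (incr X (Suc n) y)) x - a * abs_above a (incr X (Suc n) x)"
  by (simp add: G_eq algebra_simps)

lemma incr_measurable:
  assumes "filtration M F" "\<And>n. X n \<in> borel_measurable (F n)" "i \<le> n"
  shows "incr X i \<in> borel_measurable (F n)"
proof -
  have [measurable]: "X i \<in> borel_measurable (F n)"
    by (rule measurable_filtration_mono[OF assms(1,3,2)])
  have [measurable]: "X (i - 1) \<in> borel_measurable (F n)"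
    by (rule measurable_filtration_mono[OF assms(1) _ assms(2)]) (use assms(3) in simp)
  show ?thesis
    unfolding incr_def[abs_def] by measurable
qed

lemma G_measurable:
  assumes "filtration M F" "\<And>n. X n \<in> borel_measurable (F n)"
  shows "G M F X a n \<in> borel_measurable (F n)"
proof (induction n)
  case 0
  then show ?case
    by (simp add: G_eq)
next
  case (Suc n)
  have [measurable]: "G M F X a n \<in> borel_measurable (F (Suc n))"
    by (rule measurable_filtration_mono[OF assms(1) _ Suc.IH]) simp
  have [measurable]: "real_cond_exp M (F n) g \<in> borel_measurable (F (Suc n))" for g
    by (rule measurable_filtration_mono[OF assms(1), of n]) (auto intro: borel_measurable_cond_exp)
  have [measurable]: "incr X (Suc n) \<in> borel_measurable (F (Suc n))"
    using assms by (rule incr_measurable) simp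
  show ?case
    unfolding G_Suc[abs_def] by measurable
qed

lemma G_lower_bound:
  assumes "finite_measure M" "filtration M F" "\<And>n. X n \<in> borel_measurable (F n)" "0 < a"
  shows "AE x in M. - a * (\<Sum>k\<in>{1..n}. \<bar>incr X k x\<bar>) \<le> G M F X a n x"
proof -
  have "AE x in M. \<forall>i. 0 \<le> real_cond_exp M (F (i - 1)) (\<lambda>y. square_below a (incr X i y)) x"
    unfolding AE_all_countable
  proof
    fix i
    interpret finite_measure_subalgebra M "F (i - 1)"
      using assms(1,2) by (rule filtration_finite_measure_subalgebra)
    have [measurable]: "incr X i \<in> borel_measurable M"
      using assms(2) incr_measurable[OF assms(2,3) order_refl] by (rule measurable_filtration_imp_measurable)
    show "AE x in M. 0 \<le> real_cond_exp M (F (i - 1)) (\<lambda>y. square_below a (incr X i y)) x"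
      by (intro real_cond_exp_pos AE_I2) (auto simp: square_below_def)
  qed
  then show ?thesis
  proof eventually_elim
    case (elim x)
    have "a * (\<Sum>k\<in>{1..n}. abs_above a (incr X k x)) \<le> a * (\<Sum>k\<in>{1..n}. \<bar>incr X k x\<bar>)"
      using \<open>0 < a\<close> by (intro mult_left_mono sum_mono) (auto simp: abs_above_def)
    moreover have "0 \<le> (\<Sum>i\<in>{1..n}. real_cond_exp M (F (i - 1)) (\<lambda>y. square_below a (incr X i y)) x)"
      using elim by (intro sum_nonneg) auto
    ultimately show ?case
      unfolding G_eq by simp
  qed
qed

lemma submartingale_exp_G:
  fixes a l :: real
  defines "c \<equiv> frak_f (l * a) / a\<^sup>2"
  assumes "finite_measure M" "filtration M F" "submartingale M F X" "0 < a" "0 < l" "l * a \<le> 1 / 20"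
    and int_Y: "\<And>n. integrable M (\<lambda>x. exp (l * X n x - c * G M F X a n x))"
    and int_Z: "\<And>n. integrable M (\<lambda>x. exp (l * incr X n x + c * a * abs_above a (incr X n x)))"
  shows "submartingale M F (\<lambda>n x. exp (l * X n x - c * G M F X a n x))"
proof -
  have adapted: "X n \<in> borel_measurable (F n)" for n
    using assms(4) by (simp add: submartingale_def)
  define W where "W n x = exp (- c * real_cond_exp M (F n) (\<lambda>y. square_below a (incr X (Suc n) y)) x)
    * exp (l * incr X (Suc n) x + c * a * abs_above a (incr X (Suc n) x))" for n x
  have W: "integrable M (W n)" "AE x in M. 1 \<le> real_cond_exp M (F n) (W n) x" for n
  proof -
    interpret finite_measure_subalgebra M "F n"
      using assms(2,3) by (rule filtration_finite_measure_subalgebra)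
    have "integrable M (incr X (Suc n))"
      using assms(4) by (auto simp: submartingale_def incr_def[abs_def])
    moreover have "AE x in M. 0 \<le> real_cond_exp M (F n) (incr X (Suc n)) x"
      using assms(4) unfolding submartingale_def by (metis diff_Suc_1 le_add1 plus_1_eq_Suc)
    ultimately show "integrable M (W n)" "AE x in M. 1 \<le> real_cond_exp M (F n) (W n) x"
      using real_cond_exp_compensated_exp_ge_one[OF _ _ \<open>0 < a\<close> \<open>0 < l\<close> \<open>l * a \<le> 1 / 20\<close>] int_Z
      unfolding W_def[abs_def] c_def by auto
  qed
  show ?thesis
  proof (rule submartingaleI_multiplicative[OF assms(2,3) _ int_Y _ _ W])
    show "(\<lambda>x. exp (l * X n x - c * G M F X a n x)) \<in> borel_measurable (F n)" for n
      using adapted G_measurable[OF assms(3) adapted] by measurable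
    show "exp (l * X (Suc n) x - c * G M F X a (Suc n) x) = exp (l * X n x - c * G M F X a n x) * W n x"
      for n x
      by (simp add: W_def G_Suc incr_def algebra_simps flip: exp_add)
  qed simp
qed

lemma abs_incr_le_sum:
  "\<bar>incr X n x\<bar> \<le> (\<Sum>k\<in>{1..n}. \<bar>incr X k x\<bar>)"
  by (cases n) (auto simp: incr_def intro: member_le_sum)

lemma abs_le_sum_abs_incr:
  assumes "X 0 x = 0"
  shows "\<bar>X n x\<bar> \<le> (\<Sum>k\<in>{1..n}. \<bar>incr X k x\<bar>)"
proof (induction n)
  case (Suc n)
  have "X (Suc n) x = X n x + incr X (Suc n) x"
    by (simp add: incr_def)
  with Suc show ?case
    by simp
qed (simp add: assms)

lemma integrable_exp_dominated:
  fixes f g :: "'a \<Rightarrow> real"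
  assumes "integrable M (\<lambda>x. exp (g x))" "f \<in> borel_measurable M" "AE x in M. f x \<le> g x"
  shows "integrable M (\<lambda>x. exp (f x))"
proof (rule Bochner_Integration.integrable_bound[OF assms(1)])
  show "(\<lambda>x. exp (f x)) \<in> borel_measurable M"
    using assms(2) by measurable
  show "AE x in M. norm (exp (f x)) \<le> norm (exp (g x))"
    using assms(3) by eventually_elim simp
qed

lemma integrable_exp_G_process:
  assumes "finite_measure M" "filtration M F" "\<And>n. X n \<in> borel_measurable (F n)"
    and "\<forall>x\<in>space M. X 0 x = 0" "0 < a" "0 \<le> l" "0 \<le> c" "l + c * a \<le> \<beta>"
    and "integrable M (\<lambda>x. exp (\<beta> * (\<Sum>k\<in>{1..n}. \<bar>incr X k x\<bar>)))"
  shows "integrable M (\<lambda>x. exp (l * X n x - c * G M F X a n x))"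
proof (rule integrable_exp_dominated[OF assms(9)])
  have [measurable]: "X n \<in> borel_measurable M" "G M F X a n \<in> borel_measurable M"
    using assms(3) G_measurable[OF assms(2,3)]
    by (meson measurable_filtration_imp_measurable[OF assms(2)])+
  show "(\<lambda>x. l * X n x - c * G M F X a n x) \<in> borel_measurable M"
    by measurable
  show "AE x in M. l * X n x - c * G M F X a n x \<le> \<beta> * (\<Sum>k\<in>{1..n}. \<bar>incr X k x\<bar>)"
    using G_lower_bound[OF assms(1,2,3,5), of n] AE_space
  proof eventually_elim
    case (elim x)
    let ?s = "\<Sum>k\<in>{1..n}. \<bar>incr X k x\<bar>"
    have "l * X n x \<le> l * ?s"
      using abs_le_sum_abs_incr[of X x n] assms(4,6) elim(2) by (intro mult_left_mono) auto
    moreover have "c * (- a * ?s) \<le> c * G M F X a n x"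
      using elim(1) assms(7) by (rule mult_left_mono)
    moreover have "(l + c * a) * ?s \<le> \<beta> * ?s"
      using assms(8) by (intro mult_right_mono) auto
    ultimately show ?case
      by (simp add: algebra_simps)
  qed
qed

lemma integrable_exp_increment:
  assumes "incr X n \<in> borel_measurable M" "0 \<le> l" "0 \<le> c" "0 < a" "l + c * a \<le> \<beta>"
    and "integrable M (\<lambda>x. exp (\<beta> * (\<Sum>k\<in>{1..n}. \<bar>incr X k x\<bar>)))"
  shows "integrable M (\<lambda>x. exp (l * incr X n x + c * a * abs_above a (incr X n x)))"
proof (rule integrable_exp_dominated[OF assms(6)])
  show "(\<lambda>x. l * incr X n x + c * a * abs_above a (incr X n x)) \<in> borel_measurable M"
    using assms(1) by measurable
  let ?s = "\<lambda>x. \<Sum>k\<in>{1..n}. \<bar>incr X k x\<bar>"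
  have "l * incr X n x + c * a * abs_above a (incr X n x) \<le> l * ?s x + c * a * ?s x" for x
    using abs_incr_le_sum[of X n x] assms(2-4)
    by (intro add_mono mult_left_mono) (auto simp: abs_above_def)
  also have "l * ?s x + c * a * ?s x \<le> \<beta> * ?s x" for x
    using assms(5) by (auto simp flip: distrib_right intro!: mult_right_mono)
  finally show "AE x in M. l * incr X n x + c * a * abs_above a (incr X n x) \<le> \<beta> * ?s x"
    by simp
qed

theorem proposition2p2:
  fixes M :: "'a measure" and F :: "nat \<Rightarrow> 'a measure" and X :: "nat \<Rightarrow> 'a \<Rightarrow> real"
    and \<alpha> :: real
  assumes "prob_space M"
    and "filtration M F"
    and "submartingale M F X"
    and "\<forall>x\<in>space M. X 0 x = 0"
    and "\<alpha> > 0"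
    and "\<forall>n. integrable M (\<lambda>x. exp (\<alpha> * (\<Sum>k\<in>{1..n}. \<bar>incr X k x\<bar>)))"
  shows "\<forall>a>0. \<exists>l0>0. \<forall>l. 0 < l \<and> l < l0 \<longrightarrow>
           submartingale M F
             (\<lambda>n x. exp (l * X n x - frak_f (l * a) / a\<^sup>2 * G M F X a n x))"
proof (intro allI impI)
  fix a :: real
  assume "0 < a"
  have "finite_measure M"
    using assms(1) by (simp add: prob_space_def)
  have adapted: "X n \<in> borel_measurable (F n)" for n
    using assms(3) by (simp add: submartingale_def)
  show "\<exists>l0>0. \<forall>l. 0 < l \<and> l < l0 \<longrightarrow>
          submartingale M F (\<lambda>n x. exp (l * X n x - frak_f (l * a) / a\<^sup>2 * G M F X a n x))"
  proof (intro exI[of _ "min (\<alpha> / 2) (1 / (20 * a))"] conjI allI impI)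
    show "0 < min (\<alpha> / 2) (1 / (20 * a))"
      using \<open>0 < a\<close> \<open>0 < \<alpha>\<close> by simp
    fix l :: real
    assume l: "0 < l \<and> l < min (\<alpha> / 2) (1 / (20 * a))"
    then have "l * a \<le> 1 / 20"
      using \<open>0 < a\<close> by (simp add: field_simps)
    note c_bounds = frak_f_coefficient_bounds[OF \<open>0 < a\<close> conjunct1[OF l] this]
    have "l + frak_f (l * a) / a\<^sup>2 * a \<le> \<alpha>"
      using c_bounds(2) l by linarith
    then show "submartingale M F (\<lambda>n x. exp (l * X n x - frak_f (l * a) / a\<^sup>2 * G M F X a n x))"
      using \<open>finite_measure M\<close> assms(2-4,6) adapted \<open>0 < a\<close> l \<open>l * a \<le> 1 / 20\<close> c_bounds(1)
        incr_measurable[OF assms(2) adapted order_refl, THEN measurable_filtration_imp_measurable[OF assms(2)]]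
      by (intro submartingale_exp_G integrable_exp_G_process integrable_exp_increment) auto
  qed
qed

end
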